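(* Let $P$ be a maximal ranked poset. Then the number of triangular $2$-faces of the order polytope $\mathcal O(P)$ is less than or equal to the number of triangular $2$-faces of the chain polytope $\mathcal C(P)$.
   Context: For a finite poset $P=\{p_1,\dots,p_d\}$, the order polytope is $\mathcal O(P)=\{x\in\mathbb R^d: 0\le x_i\le 1 \text{ for all } i,\ x_i\ge x_j \text{ if } p_i\le p_j \text{ in } P\}$ and the chain polytope is $\mathcal C(P)=\{x\in\mathbb R^d: x_i\ge 0 \text{ for all } i,\ x_{i_1}+\dots+x_{i_k}\le 1 \text{ if } p_{i_1}<\dots<p_{i_k} \text{ in } P\}$. A triangular 2-face is a 2-dimensional face with exactly three vertices. The length of a chain $C$ is $|C|-1$; $P$ is graded of rank $n$ if every maximal chain has length $n$, and then $P=\bigcup_{i=0}^n P_i$ where every maximal chain is $p_0<\dots<p_n$ with $p_i\in P_i$ (elements of rank $i$). $P$ is a maximal ranked poset if it is graded and any two elements of distinct ranks are comparable. *)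

theory Defs
  imports "HOL-Analysis.Analysis"
begin

text \<open>A finite poset is modelled by a finite type 'n (the elements p_1..p_d)
 together with a partial order relation le on it. Points of R^d are real^'n.\<close>

definition poset :: "('n \<Rightarrow> 'n \<Rightarrow> bool) \<Rightarrow> bool" where
  "poset le \<longleftrightarrow> (\<forall>a. le a a) \<and> (\<forall>a b. le a b \<and> le b a \<longrightarrow> a = b)
     \<and> (\<forall>a b c. le a b \<and> le b c \<longrightarrow> le a c)"

definition is_chain :: "('n \<Rightarrow> 'n \<Rightarrow> bool) \<Rightarrow> 'n set \<Rightarrow> bool" where
  "is_chain le C \<longleftrightarrow> (\<forall>a\<in>C. \<forall>b\<in>C. le a b \<or> le b a)"

definition maximal_chain :: "('n \<Rightarrow> 'n \<Rightarrow> bool) \<Rightarrow> 'n set \<Rightarrow> bool" where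
  "maximal_chain le C \<longleftrightarrow> is_chain le C \<and> (\<forall>D. is_chain le D \<and> C \<subseteq> D \<longrightarrow> D = C)"

definition graded_of_rank :: "('n::finite \<Rightarrow> 'n \<Rightarrow> bool) \<Rightarrow> nat \<Rightarrow> bool" where
  "graded_of_rank le n \<longleftrightarrow> (\<forall>C. maximal_chain le C \<longrightarrow> card C - 1 = n)"

definition graded :: "('n::finite \<Rightarrow> 'n \<Rightarrow> bool) \<Rightarrow> bool" where
  "graded le \<longleftrightarrow> (\<exists>n. graded_of_rank le n)"

text \<open>Rank of an element: the maximal length of a chain whose top element is p
 (in a graded poset this is the index i with p in P_i).\<close>
definition rank :: "('n::finite \<Rightarrow> 'n \<Rightarrow> bool) \<Rightarrow> 'n \<Rightarrow> nat" where
  "rank le p = Max {card C - 1 | C. is_chain le C \<and> p \<in> C \<and> (\<forall>q\<in>C. le q p)}"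

definition maximal_ranked :: "('n::finite \<Rightarrow> 'n \<Rightarrow> bool) \<Rightarrow> bool" where
  "maximal_ranked le \<longleftrightarrow> graded le \<and>
     (\<forall>p q. rank le p \<noteq> rank le q \<longrightarrow> le p q \<or> le q p)"

definition order_polytope :: "('n::finite \<Rightarrow> 'n \<Rightarrow> bool) \<Rightarrow> (real^'n) set" where
  "order_polytope le = {x. (\<forall>i. 0 \<le> x$i \<and> x$i \<le> 1) \<and> (\<forall>i j. le i j \<longrightarrow> x$j \<le> x$i)}"

definition chain_polytope :: "('n::finite \<Rightarrow> 'n \<Rightarrow> bool) \<Rightarrow> (real^'n) set" where
  "chain_polytope le = {x. (\<forall>i. 0 \<le> x$i) \<and>
      (\<forall>C. is_chain le C \<longrightarrow> (\<Sum>i\<in>C. x$i) \<le> 1)}"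

definition triangular_2faces :: "('a::euclidean_space) set \<Rightarrow> 'a set set" where
  "triangular_2faces S = {F. F face_of S \<and> aff_dim F = 2 \<and>
      card {v. v extreme_point_of F} = 3}"

end

theory Submission
  imports Defs
begin

text \<open>
  In a maximal ranked poset p < q holds exactly when rank p < rank q, so the poset is governed by
  its rank function r. Every triangular 2-face of the order polytope is the convex hull of the
  characteristic vectors of down-sets I \<subset> J \<subset> K with J - I and K - J connected and some element
  of J - I below some element of K - J: the vertex down-sets of a face are closed under replacing
  A, B by down-sets D, D' with A \<inter> B = D \<inter> D' and A \<union> B = D \<union> D', because then
  char_vec A + char_vec B = char_vec D + char_vec D'. On the other side, characteristic vectors of
  three antichains in suitable relative position span a triangular 2-face of the chain polytope,
  cut out by an explicit supporting hyperplane. The top layers of I, J, K (after replacing I = {}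
  by a suitable nonempty down-set) form such a configuration, and their down-closures give back
  I, J, K; this injects the triangles of the order polytope into those of the chain polytope.
\<close>

definition char_vec :: "'n set \<Rightarrow> real^'n" where
  "char_vec D = (\<chi> i. if i \<in> D then 1 else 0)"

lemma char_vec_nth [simp]: "char_vec D $ i = (if i \<in> D then 1 else 0)"
  by (simp add: char_vec_def)

lemma inj_char_vec: "inj (char_vec :: _ \<Rightarrow> real^'n)"
proof (rule injI)
  fix A B :: "'n set"
  assume "char_vec A = char_vec B"
  then have "char_vec A $ i = char_vec B $ i" for i by simp
  then have "i \<in> A \<longleftrightarrow> i \<in> B" for i by (metis char_vec_nth zero_neq_one)
  then show "A = B" by blast
qed

lemma inner_char_vec: "char_vec A \<bullet> x = (\<Sum>p\<in>A. x$p)"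
proof -
  have "char_vec A \<bullet> x = (\<Sum>p\<in>UNIV. if p \<in> A then x$p else 0)"
    by (auto simp: inner_vec_def intro: sum.cong)
  then show ?thesis by (simp add: sum.If_cases)
qed

lemma char_vec_add_char_vec:
  assumes "A \<inter> B = C \<inter> D" "A \<union> B = C \<union> D"
  shows "char_vec A + char_vec B = char_vec C + char_vec D"
proof -
  have "i \<in> A \<and> i \<in> B \<longleftrightarrow> i \<in> C \<and> i \<in> D" "i \<in> A \<or> i \<in> B \<longleftrightarrow> i \<in> C \<or> i \<in> D" for i
    using assms by blast+
  then show ?thesis by (auto simp: vec_eq_iff)
qed

lemma extreme_point_of_01:
  fixes x :: "real^'n"
  assumes "x \<in> S" "S \<subseteq> cbox 0 1" "\<And>i. x$i = 0 \<or> x$i = 1"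
  shows "x extreme_point_of S"
  unfolding extreme_point_of_def
proof (intro conjI ballI notI)
  fix a b assume ab: "a \<in> S" "b \<in> S" and "x \<in> open_segment a b"
  then obtain u where "a \<noteq> b" "0 < u" "u < 1" and x: "x = (1 - u) *\<^sub>R a + u *\<^sub>R b"
    by (auto simp: in_segment)
  then obtain i where "a$i \<noteq> b$i" by (metis vec_eq_iff)
  with \<open>0 < u\<close> \<open>u < 1\<close> have "x$i \<in> open_segment (a$i) (b$i)"
    by (auto simp: in_segment x)
  moreover have "a$i \<in> {0..1}" "b$i \<in> {0..1}"
    using ab assms(2) by (auto simp: mem_box_cart)
  ultimately have "0 < x$i \<and> x$i < 1"
    by (auto simp: open_segment_eq_real_ivl split: if_splits)
  with assms(3)[of i] show False by auto
qed (fact assms)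

lemma extreme_points_convex_hull_01:
  fixes V :: "(real^'n) set"
  assumes "\<And>v i. v \<in> V \<Longrightarrow> v$i = 0 \<or> v$i = 1"
  shows "{x. x extreme_point_of convex hull V} = V"
proof -
  have "v$i \<in> {0..1}" if "v \<in> V" for v i
    using assms[OF that, of i] by auto
  then have "V \<subseteq> cbox 0 1"
    by (simp add: mem_box_cart subset_iff)
  then have "convex hull V \<subseteq> cbox 0 1"
    by (simp add: hull_minimal)
  then have "v extreme_point_of convex hull V" if "v \<in> V" for v
    using that assms by (intro extreme_point_of_01) (auto intro: hull_inc)
  then show ?thesis
    using extreme_point_of_convex_hull by blast
qed

lemma inj_convex_hull_char_vec: "inj (\<lambda>S. convex hull (char_vec ` S) :: (real^'n) set)"
proof (rule injI)
  fix S S' :: "'n set set"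
  have extreme: "{v. v extreme_point_of convex hull (char_vec ` T)} = char_vec ` T" for T :: "'n set set"
    by (rule extreme_points_convex_hull_01) auto
  assume "convex hull (char_vec ` S) = convex hull (char_vec ` S')"
  then have "char_vec ` S = char_vec ` S'"
    using extreme by metis
  then show "S = S'"
    by (simp add: inj_image_eq_iff[OF inj_char_vec])
qed

lemma affine_independent_01:
  fixes a b c :: "real^'n"
  assumes "a \<noteq> b" "b \<noteq> c" "a \<noteq> c"
    and "\<And>v i. v \<in> {a, b, c} \<Longrightarrow> v$i = 0 \<or> v$i = 1"
  shows "\<not> affine_dependent {a, b, c}"
proof -
  have ext: "v extreme_point_of convex hull {a, b, c}" if "v \<in> {a, b, c}" for v
    using extreme_points_convex_hull_01[of "{a, b, c}"] assms(4) that by blast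
  have "\<not> between (y, z) v"
    if "v \<in> {a, b, c}" "y \<in> {a, b, c}" "z \<in> {a, b, c}" "v \<noteq> y" "v \<noteq> z" for v y z
  proof
    assume "between (y, z) v"
    then have "v \<in> open_segment y z"
      using that by (simp add: between_mem_segment open_segment_def)
    moreover have "y \<in> convex hull {a, b, c}" "z \<in> convex hull {a, b, c}"
      using that by (auto intro: hull_inc)
    ultimately show False
      using ext[OF that(1)] by (auto simp: extreme_point_of_def)
  qed
  then have "\<not> collinear {a, b, c}"
    unfolding collinear_between_cases using assms(1-3) by auto
  then show ?thesis
    using collinear_3_eq_affine_dependent by blast
qed

lemma face_of_add_eq:
  fixes u v y z :: "'a::real_vector"
  assumes "F face_of S" "u \<in> F" "v \<in> F" "y \<in> S" "z \<in> S" "u + v = y + z"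
  shows "y \<in> F \<and> z \<in> F"
proof -
  have "midpoint u v \<in> F"
    using face_of_imp_convex[OF assms(1)] assms(2,3)
    by (meson convex_contains_segment midpoint_in_closed_segment subsetD)
  moreover have "midpoint u v = midpoint y z"
    using assms(6) by (simp add: midpoint_def)
  ultimately show ?thesis
    using assms(1,4,5) midpoint_in_open_segment[of y z]
    by (cases "y = z") (simp, metis face_ofD)
qed

lemma triangular_2face_of_supporting_hyperplane:
  fixes a b c w :: "real^'n"
  assumes "convex S" "a \<noteq> b" "b \<noteq> c" "a \<noteq> c"
    and zero_one: "\<And>v i. v \<in> {a, b, c} \<Longrightarrow> v$i = 0 \<or> v$i = 1"
    and "{a, b, c} \<subseteq> S" "\<And>x. x \<in> S \<Longrightarrow> w \<bullet> x \<le> d"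
    and "w \<bullet> a = d" "w \<bullet> b = d" "w \<bullet> c = d"
    and "\<And>x. x \<in> S \<Longrightarrow> w \<bullet> x = d \<Longrightarrow> x \<in> convex hull {a, b, c}"
  shows "convex hull {a, b, c} \<in> triangular_2faces S"
proof -
  have "S \<inter> {x. w \<bullet> x = d} = convex hull {a, b, c}"
  proof
    show "convex hull {a, b, c} \<subseteq> S \<inter> {x. w \<bullet> x = d}"
      using assms(1,6,8-10) by (intro hull_minimal convex_Int convex_hyperplane) auto
  qed (use assms(11) in blast)
  moreover have "S \<inter> {x. w \<bullet> x = d} face_of S"
    using assms(1,7) by (rule face_of_Int_supporting_hyperplane_le)
  moreover have indep: "\<not> affine_dependent {a, b, c}"
    using affine_independent_01 assms(2-5) by blast
  then have "aff_dim (convex hull {a, b, c}) = 2"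
    using aff_dim_affine_independent[OF indep] assms(2-4) by (simp add: aff_dim_convex_hull)
  moreover have "{v. v extreme_point_of convex hull {a, b, c}} = {a, b, c}"
    using extreme_points_convex_hull_01[of "{a, b, c}"] zero_one by blast
  then have "card {v. v extreme_point_of convex hull {a, b, c}} = 3"
    using assms(2-4) by simp
  ultimately show ?thesis
    unfolding triangular_2faces_def by auto
qed

definition down_closed :: "('n \<Rightarrow> 'n \<Rightarrow> bool) \<Rightarrow> 'n set \<Rightarrow> bool" where
  "down_closed le D \<longleftrightarrow> (\<forall>p q. le p q \<longrightarrow> q \<in> D \<longrightarrow> p \<in> D)"

lemma order_polytope_subset_cbox: "order_polytope le \<subseteq> cbox 0 1"
  by (auto simp: order_polytope_def mem_box_cart)

lemma polyhedron_order_polytope: "polyhedron (order_polytope le)"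
proof -
  have "order_polytope le = \<Inter> (range (\<lambda>i. {x. - axis i 1 \<bullet> x \<le> 0}) \<union> range (\<lambda>i. {x. axis i 1 \<bullet> x \<le> 1})
      \<union> (\<lambda>(i, j). {x. (axis j 1 - axis i 1) \<bullet> x \<le> 0}) ` {(i, j). le i j})"
    by (auto simp: order_polytope_def inner_diff_left inner_axis')
  then show ?thesis
    by (auto intro!: polyhedron_halfspace_le polyhedron_halfspace_ge)
qed

lemma compact_order_polytope: "compact (order_polytope le)"
  using order_polytope_subset_cbox polyhedron_order_polytope
  by (meson bounded_cbox bounded_subset compact_eq_bounded_closed polyhedron_imp_closed)

lemma char_vec_in_order_polytope: "down_closed le D \<Longrightarrow> char_vec D \<in> order_polytope le"
  by (auto simp: order_polytope_def down_closed_def)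

lemma order_polytope_shift_level:
  assumes "x \<in> order_polytope le" "\<bar>t\<bar> \<le> c" "\<bar>t\<bar> \<le> 1 - c"
    and "\<And>q. x$q \<noteq> c \<Longrightarrow> \<bar>t\<bar> \<le> \<bar>x$q - c\<bar>"
  shows "x + t *\<^sub>R char_vec {q. x$q = c} \<in> order_polytope le"
proof -
  have "x$j \<le> x$i" if "le i j" for i j
    using assms(1) that by (simp add: order_polytope_def)
  then show ?thesis
    using assms by (fastforce simp: order_polytope_def abs_le_iff)
qed

text \<open>
  If some coordinate c of x is fractional, moving all coordinates equal to c by \<plusminus>e keeps x in
  the polytope for small e > 0, so x is the midpoint of two of its points.
\<close>
lemma extreme_point_of_order_polytope_01:
  assumes "x extreme_point_of order_polytope le"
  shows "x$p = 0 \<or> x$p = 1"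
proof (rule ccontr)
  have x: "x \<in> order_polytope le"
    using assms by (simp add: extreme_point_of_def)
  define c where "c = x$p"
  assume "\<not> (x$p = 0 \<or> x$p = 1)"
  then have c: "0 < c" "c < 1"
    using x by (auto simp: order_polytope_def c_def less_le)
  define V where "V = (\<lambda>v. \<bar>v - c\<bar>) ` (insert 0 (insert 1 (range (($) x))) - {c})"
  define e where "e = Min V"
  have "finite V" "V \<noteq> {}" "\<forall>v\<in>V. 0 < v"
    using c by (auto simp: V_def)
  then have "0 < e"
    by (simp add: e_def)
  have e_le: "e \<le> \<bar>v - c\<bar>" if "v \<in> insert 0 (insert 1 (range (($) x)))" "v \<noteq> c" for v
    unfolding e_def using \<open>finite V\<close> that by (intro Min_le) (auto simp: V_def)
  define E where "E = char_vec {q. x$q = c}"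
  have shift: "x + t *\<^sub>R E \<in> order_polytope le" if "\<bar>t\<bar> \<le> e" for t
    unfolding E_def using x e_le[of 0] e_le[of 1] e_le[of "x$_"] c that
    by (intro order_polytope_shift_level) force+
  have "x + e *\<^sub>R E \<noteq> x - e *\<^sub>R E"
    using \<open>0 < e\<close> by (auto simp: E_def c_def vec_eq_iff intro!: exI[of _ p])
  moreover have "midpoint (x + e *\<^sub>R E) (x - e *\<^sub>R E) = x"
    by (simp add: midpoint_def vec_eq_iff)
  ultimately have "x \<in> open_segment (x + e *\<^sub>R E) (x - e *\<^sub>R E)"
    by (metis midpoint_in_open_segment)
  moreover have "x + e *\<^sub>R E \<in> order_polytope le" "x - e *\<^sub>R E \<in> order_polytope le"
    using shift[of e] shift[of "- e"] \<open>0 < e\<close> by auto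
  ultimately show False
    using assms by (auto simp: extreme_point_of_def)
qed

lemma extreme_point_of_order_polytope:
  assumes "x extreme_point_of order_polytope le"
  obtains D where "down_closed le D" "x = char_vec D"
proof
  have x: "x \<in> order_polytope le"
    using assms by (simp add: extreme_point_of_def)
  show "down_closed le {q. x$q = 1}"
  proof (unfold down_closed_def, intro allI impI)
    fix p q assume "le p q" "q \<in> {q. x$q = 1}"
    moreover have "x$q \<le> x$p" "x$p \<le> 1"
      using x \<open>le p q\<close> by (simp_all add: order_polytope_def)
    ultimately show "p \<in> {q. x$q = 1}" by simp
  qed
  show "x = char_vec {q. x$q = 1}"
    using extreme_point_of_order_polytope_01[OF assms] by (auto simp: vec_eq_iff)
qed

lemma extreme_points_face_order_polytope:
  assumes "F face_of order_polytope le"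
  shows "{v. v extreme_point_of F} = char_vec ` {D. down_closed le D \<and> char_vec D \<in> F}"
proof (intro equalityI subsetI)
  fix v assume "v \<in> {v. v extreme_point_of F}"
  then have "v extreme_point_of order_polytope le" "v \<in> F"
    using extreme_point_of_face[OF assms] by auto
  moreover obtain D where "down_closed le D" "v = char_vec D"
    using \<open>v extreme_point_of order_polytope le\<close> by (rule extreme_point_of_order_polytope)
  ultimately show "v \<in> char_vec ` {D. down_closed le D \<and> char_vec D \<in> F}"
    by blast
next
  have "F \<subseteq> cbox 0 1"
    using face_of_imp_subset[OF assms] order_polytope_subset_cbox by blast
  fix v assume "v \<in> char_vec ` {D. down_closed le D \<and> char_vec D \<in> F}"
  then show "v \<in> {v. v extreme_point_of F}"
    using \<open>F \<subseteq> cbox 0 1\<close> by (auto intro!: extreme_point_of_01)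
qed

lemma face_order_polytope_exchange:
  assumes "F face_of order_polytope le" "char_vec A \<in> F" "char_vec B \<in> F"
    and "down_closed le D" "down_closed le D'" "A \<inter> B = D \<inter> D'" "A \<union> B = D \<union> D'"
  shows "char_vec D \<in> F"
proof -
  have "char_vec A + char_vec B = char_vec D + char_vec D'"
    using assms(6,7) by (rule char_vec_add_char_vec)
  then show ?thesis
    using face_of_add_eq[OF assms(1-3)] assms(4,5) char_vec_in_order_polytope by blast
qed

lemma face_order_polytope_eq_convex_hull:
  assumes "F face_of order_polytope le"
  shows "F = convex hull {v. v extreme_point_of F}"
proof (rule Krein_Milman_Minkowski)
  show "compact F"
    using face_of_imp_compact[OF _ compact_order_polytope assms]
      polyhedron_imp_convex[OF polyhedron_order_polytope] by blast
  show "convex F"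
    using face_of_imp_convex[OF assms] .
qed

lemma polyhedron_chain_polytope: "polyhedron (chain_polytope le)"
proof -
  have "chain_polytope le = \<Inter> (range (\<lambda>i. {x. axis i 1 \<bullet> x \<ge> 0})
      \<union> (\<lambda>C. {x. char_vec C \<bullet> x \<le> 1}) ` {C. is_chain le C})"
    by (auto simp: chain_polytope_def inner_char_vec inner_axis')
  then show ?thesis
    by (auto intro!: polyhedron_halfspace_le polyhedron_halfspace_ge)
qed

lemma convex_chain_polytope: "convex (chain_polytope le)"
  by (rule polyhedron_imp_convex[OF polyhedron_chain_polytope])

lemma finite_triangular_2faces_chain_polytope: "finite (triangular_2faces (chain_polytope le))"
  using finite_polyhedron_faces[OF polyhedron_chain_polytope]
  by (rule finite_subset[rotated]) (auto simp: triangular_2faces_def)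

section \<open>Rank orders\<close>

definition rank_order :: "('n \<Rightarrow> nat) \<Rightarrow> 'n \<Rightarrow> 'n \<Rightarrow> bool" where
  "rank_order r p q \<longleftrightarrow> p = q \<or> r p < r q"

lemma is_chain_rank_order: "is_chain (rank_order r) C \<longleftrightarrow> inj_on r C"
  unfolding is_chain_def inj_on_def rank_order_def by (metis less_irrefl nat_neq_iff)

lemma down_closed_rank_order:
  "down_closed (rank_order r) D \<longleftrightarrow> (\<forall>p q. r p < r q \<longrightarrow> q \<in> D \<longrightarrow> p \<in> D)"
  by (auto simp: down_closed_def rank_order_def)

lemma mem_chain_polytope_rank_order:
  "x \<in> chain_polytope (rank_order r) \<longleftrightarrow>
     (\<forall>i. 0 \<le> x$i) \<and> (\<forall>C. inj_on r C \<longrightarrow> (\<Sum>i\<in>C. x$i) \<le> 1)"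
  by (simp add: chain_polytope_def is_chain_rank_order)

context
  fixes r :: "'n::finite \<Rightarrow> nat"
begin

abbreviation down_set :: "'n set \<Rightarrow> bool" where
  "down_set \<equiv> down_closed (rank_order r)"

definition level :: "nat \<Rightarrow> 'n set" where
  "level j = {p. r p = j}"

definition below :: "nat \<Rightarrow> 'n set" where
  "below j = {p. r p < j}"

definition height :: "'n set \<Rightarrow> nat" where
  "height D = Max (r ` D)"

text \<open>For D = {} the height is the junk value Max {}, but maximals {} = {} regardless.\<close>
definition maximals :: "'n set \<Rightarrow> 'n set" where
  "maximals D = D \<inter> level (height D)"

definition down_closure :: "'n set \<Rightarrow> 'n set" where
  "down_closure U = U \<union> {p. \<exists>q\<in>U. r p < r q}"

lemma down_set_below: "down_set (below j)"
  by (auto simp: down_closed_rank_order below_def)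

lemma down_set_below_Un:
  assumes "X \<subseteq> level j"
  shows "down_set (below j \<union> X)"
  using assms by (auto simp: down_closed_rank_order below_def level_def subset_iff)

lemma height_ge: "p \<in> D \<Longrightarrow> r p \<le> height D"
  unfolding height_def by (rule Max_ge) simp_all

lemma height_attained:
  assumes "D \<noteq> {}"
  obtains q where "q \<in> D" "r q = height D"
proof -
  have "height D \<in> r ` D"
    unfolding height_def by (rule Max_in) (use assms in simp_all)
  then obtain q where "q \<in> D" "height D = r q"
    by (rule imageE)
  then show ?thesis
    using that by simp
qed

lemma height_mono:
  assumes "D \<subseteq> E" "D \<noteq> {}"
  shows "height D \<le> height E"
proof -
  obtain q where "q \<in> D" "r q = height D"
    using height_attained assms(2) by blast
  then show ?thesis
    using height_ge[of q E] assms(1) by auto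
qed

lemma height_below_less:
  assumes "below j \<noteq> {}"
  shows "height (below j) < j"
proof -
  obtain q where "q \<in> below j" "r q = height (below j)"
    using height_attained assms by blast
  then show ?thesis
    by (simp add: below_def)
qed

lemma maximals_subset_level: "maximals D \<subseteq> level (height D)"
  by (simp add: maximals_def)

lemma maximals_nonempty:
  assumes "D \<noteq> {}"
  shows "maximals D \<noteq> {}"
proof -
  obtain q where "q \<in> D" "r q = height D"
    using height_attained assms by blast
  then have "q \<in> maximals D"
    by (simp add: maximals_def level_def)
  then show ?thesis by blast
qed

lemma below_height_subset:
  assumes "down_set D" "D \<noteq> {}"
  shows "below (height D) \<subseteq> D"
proof -
  obtain q where "q \<in> D" "r q = height D"
    using height_attained assms(2) by blast
  then show ?thesis
    using assms(1) unfolding down_closed_rank_order below_def by (metis mem_Collect_eq subsetI)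
qed

lemma down_set_decomp:
  assumes "down_set D" "D \<noteq> {}"
  shows "D = below (height D) \<union> maximals D" "below (height D) \<inter> maximals D = {}"
proof -
  have "p \<in> below (height D) \<or> p \<in> maximals D" if "p \<in> D" for p
    using height_ge[OF that] that by (auto simp: below_def maximals_def level_def)
  then show "D = below (height D) \<union> maximals D"
    using below_height_subset[OF assms] by (auto simp: maximals_def)
  show "below (height D) \<inter> maximals D = {}"
    by (auto simp: below_def maximals_def level_def)
qed

lemma diff_below_height:
  assumes "down_set D" "D \<noteq> {}"
  shows "D - below (height D) = maximals D"
  using down_set_decomp[OF assms] by blast

lemma below_height_psubset:
  assumes "down_set D" "D \<noteq> {}"
  shows "below (height D) \<subset> D"
  using below_height_subset[OF assms] diff_below_height[OF assms] maximals_nonempty[OF assms(2)] by blast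

lemma down_closure_maximals:
  assumes "down_set D"
  shows "down_closure (maximals D) = D"
proof (cases "D = {}")
  case False
  obtain q where "q \<in> maximals D"
    using maximals_nonempty[OF False] by blast
  then have "below (height D) \<subseteq> down_closure (maximals D)"
    by (auto simp: down_closure_def below_def maximals_def level_def)
  moreover have "down_closure (maximals D) \<subseteq> D"
    using assms by (auto simp: down_closure_def maximals_def down_closed_rank_order)
  ultimately show ?thesis
    using down_set_decomp[OF assms False] by (auto simp: down_closure_def)
qed (simp add: down_closure_def maximals_def)

lemma height_below_Un_level:
  assumes "X \<noteq> {}" "X \<subseteq> level j"
  shows "height (below j \<union> X) = j"
proof -
  have X: "r p = j" if "p \<in> X" for p
    using assms(2) that by (auto simp: level_def)
  obtain x where "x \<in> X"
    using assms(1) by blast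
  have "r p \<le> j" if "p \<in> below j \<union> X" for p
    using that X by (auto simp: below_def)
  then have "height (below j \<union> X) \<le> j"
    unfolding height_def using \<open>x \<in> X\<close> by (subst Max_le_iff) auto
  moreover have "j \<le> height (below j \<union> X)"
    using height_ge[of x "below j \<union> X"] X[OF \<open>x \<in> X\<close>] \<open>x \<in> X\<close> by simp
  ultimately show ?thesis
    by simp
qed

lemma maximals_same_height:
  assumes "down_set I" "I \<subseteq> J" "I \<noteq> {}" "height I = height J"
  shows "J - I \<subseteq> level (height J)" "maximals J = maximals I \<union> (J - I)"
proof -
  have "below (height J) \<subseteq> I"
    using below_height_subset[OF assms(1,3)] assms(4) by simp
  then have "r p = height J" if "p \<in> J - I" for p
    using height_ge[of p J] that by (force simp: below_def)
  then show "J - I \<subseteq> level (height J)"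
    by (auto simp: level_def)
  then show "maximals J = maximals I \<union> (J - I)"
    using assms(2,4) by (auto simp: maximals_def)
qed

section \<open>Triangular 2-faces of the order polytope\<close>

text \<open>For the rank order this is connectedness of the comparability graph on A.\<close>
definition rank_connected :: "'n set \<Rightarrow> bool" where
  "rank_connected A \<longleftrightarrow> is_singleton A \<or> (\<exists>a\<in>A. \<exists>b\<in>A. r a \<noteq> r b)"

lemma rank_connected_level: "A \<subseteq> level j \<Longrightarrow> rank_connected A \<longleftrightarrow> is_singleton A"
  by (auto simp: rank_connected_def level_def)

lemma is_singleton_diff_same_height:
  assumes "down_set I" "I \<subseteq> J" "I \<noteq> {}" "height I = height J" "rank_connected (J - I)"
  shows "is_singleton (J - I)"
  using maximals_same_height(1)[OF assms(1-4)] assms(5) by (simp add: rank_connected_level)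

definition order_triangle :: "'n set \<Rightarrow> 'n set \<Rightarrow> 'n set \<Rightarrow> bool" where
  "order_triangle I J K \<longleftrightarrow> down_set I \<and> down_set J \<and> down_set K \<and> I \<subset> J \<and> J \<subset> K \<and>
     rank_connected (J - I) \<and> rank_connected (K - J) \<and> (\<exists>a\<in>J - I. \<exists>b\<in>K - J. r a < r b)"

lemma down_set_insert_level:
  assumes "down_set A" "down_set B" "a \<in> B" "B - A \<subseteq> level (r a)"
  shows "down_set (insert a A)"
  unfolding down_closed_rank_order
proof (intro allI impI)
  fix p q assume pq: "r p < r q" "q \<in> insert a A"
  show "p \<in> insert a A"
  proof (cases "q = a")
    case True
    then have "p \<in> B"
      using pq assms(2,3) by (auto simp: down_closed_rank_order)
    then show ?thesis
      using pq True assms(4) by (auto simp: level_def)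
  qed (use pq assms(1) in \<open>auto simp: down_closed_rank_order\<close>)
qed

lemma down_set_Diff_level:
  assumes "down_set A" "down_set B" "a \<notin> A" "B - A \<subseteq> level (r a)"
  shows "down_set (B - {a})"
  unfolding down_closed_rank_order
proof (intro allI impI)
  fix p q assume pq: "r p < r q" "q \<in> B - {a}"
  have "p \<noteq> a"
  proof
    assume "p = a"
    then have "q \<notin> A"
      using pq assms(1,3) by (auto simp: down_closed_rank_order)
    then show False
      using pq assms(4) \<open>p = a\<close> by (auto simp: level_def)
  qed
  then show "p \<in> B - {a}"
    using pq assms(2) by (auto simp: down_closed_rank_order)
qed

lemma down_set_Un_Diff:
  assumes "down_set I" "down_set K" "\<not> (\<exists>a\<in>J - I. \<exists>b\<in>K - J. r a < r b)"
  shows "down_set (I \<union> (K - J))"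
  unfolding down_closed_rank_order
proof (intro allI impI)
  fix p q assume pq: "r p < r q" "q \<in> I \<union> (K - J)"
  show "p \<in> I \<union> (K - J)"
  proof (cases "q \<in> I")
    case True
    then show ?thesis
      using assms(1) pq by (simp add: down_closed_rank_order)
  next
    case False
    then have "q \<in> K - J" "p \<in> K"
      using assms(2) pq by (auto simp: down_closed_rank_order)
    then show ?thesis
      using assms(3) pq(1) by blast
  qed
qed

definition exchange_closed :: "'n set set \<Rightarrow> bool" where
  "exchange_closed \<D> \<longleftrightarrow> (\<forall>A\<in>\<D>. \<forall>B\<in>\<D>. \<forall>D D'. down_set D \<and> down_set D' \<and>
     A \<inter> B = D \<inter> D' \<and> A \<union> B = D \<union> D' \<longrightarrow> D \<in> \<D>)"

lemma exchange_closedD: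
  assumes "exchange_closed \<D>" "A \<in> \<D>" "B \<in> \<D>" "down_set D" "down_set D'"
    and "A \<inter> B = D \<inter> D'" "A \<union> B = D \<union> D'"
  shows "D \<in> \<D>"
  using assms unfolding exchange_closed_def by blast

lemma exchange_closed_face:
  assumes "F face_of order_polytope (rank_order r)"
  shows "exchange_closed {D. down_set D \<and> char_vec D \<in> F}"
  unfolding exchange_closed_def using face_order_polytope_exchange[OF assms] by blast

lemma exchange_closed_comparable:
  assumes "exchange_closed \<D>" "card \<D> \<le> 3" "\<forall>D\<in>\<D>. down_set D" "A \<in> \<D>" "B \<in> \<D>"
  shows "A \<subseteq> B \<or> B \<subseteq> A"
proof (rule ccontr)
  assume incomparable: "\<not> (A \<subseteq> B \<or> B \<subseteq> A)"
  have "down_set (A \<union> B)" "down_set (A \<inter> B)"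
    using assms(3-5) by (auto simp: down_closed_rank_order)
  then have "A \<union> B \<in> \<D>" "A \<inter> B \<in> \<D>"
    by (auto intro: exchange_closedD[OF assms(1,4,5)])
  then have "{A, B, A \<union> B, A \<inter> B} \<subseteq> \<D>"
    using assms(4,5) by blast
  then have "card {A, B, A \<union> B, A \<inter> B} \<le> card \<D>"
    by (rule card_mono[rotated]) simp
  moreover have "A \<noteq> B" "A \<noteq> A \<union> B" "A \<noteq> A \<inter> B" "B \<noteq> A \<union> B" "B \<noteq> A \<inter> B"
    "A \<union> B \<noteq> A \<inter> B"
    using incomparable by blast+
  then have "card {A, B, A \<union> B, A \<inter> B} = 4"
    by simp
  ultimately show False
    using assms(2) by simp
qed

lemma exchange_closed_gap:
  assumes "exchange_closed \<D>" "A \<in> \<D>" "B \<in> \<D>" "down_set A" "down_set B" "A \<subset> B"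
    and "\<forall>E\<in>\<D>. \<not> (A \<subset> E \<and> E \<subset> B)"
  shows "rank_connected (B - A)"
proof (rule ccontr)
  assume not_connected: "\<not> rank_connected (B - A)"
  obtain a where a: "a \<in> B" "a \<notin> A"
    using assms(6) by blast
  have "B - A \<subseteq> level (r a)"
    using not_connected a unfolding rank_connected_def level_def by blast
  then have "down_set (insert a A)" "down_set (B - {a})"
    using down_set_insert_level down_set_Diff_level assms(4,5) a by blast+
  moreover have "A \<inter> B = insert a A \<inter> (B - {a})" "A \<union> B = insert a A \<union> (B - {a})"
    using assms(6) a by auto
  ultimately have "insert a A \<in> \<D>"
    using exchange_closedD[OF assms(1-3)] by blast
  moreover have "A \<subset> insert a A" "insert a A \<subset> B"
    using a assms(6) not_connected by (auto simp: rank_connected_def is_singleton_def)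
  ultimately show False
    using assms(7) by blast
qed

lemma exchange_closed_order_triangle:
  assumes "exchange_closed {I, J, K}" "down_set I" "down_set J" "down_set K" "I \<subset> J" "J \<subset> K"
  shows "order_triangle I J K"
proof -
  have "rank_connected (J - I)"
    by (rule exchange_closed_gap[OF assms(1) _ _ assms(2,3,5)]) (use assms(5,6) in auto)
  moreover have "rank_connected (K - J)"
    by (rule exchange_closed_gap[OF assms(1) _ _ assms(3,4,6)]) (use assms(5,6) in auto)
  moreover have "\<exists>a\<in>J - I. \<exists>b\<in>K - J. r a < r b"
  proof (rule ccontr)
    assume "\<not> (\<exists>a\<in>J - I. \<exists>b\<in>K - J. r a < r b)"
    then have "down_set (I \<union> (K - J))"
      using down_set_Un_Diff assms(2,4) by blast
    moreover have "I \<inter> K = (I \<union> (K - J)) \<inter> J" "I \<union> K = (I \<union> (K - J)) \<union> J"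
      using assms(5,6) by auto
    ultimately have "I \<union> (K - J) \<in> {I, J, K}"
      using exchange_closedD[OF assms(1) _ _ _ assms(3), of I K] by simp
    moreover have "I \<union> (K - J) \<noteq> I" "I \<union> (K - J) \<noteq> J" "I \<union> (K - J) \<noteq> K"
      using assms(5,6) by blast+
    ultimately show False
      by blast
  qed
  ultimately show ?thesis
    using assms by (simp add: order_triangle_def)
qed

lemma sorted_chain3:
  fixes X Y Z :: "'a set"
  assumes "X \<noteq> Y" "Y \<noteq> Z" "X \<noteq> Z"
    and "X \<subseteq> Y \<or> Y \<subseteq> X" "Y \<subseteq> Z \<or> Z \<subseteq> Y" "X \<subseteq> Z \<or> Z \<subseteq> X"
  obtains I J K where "{X, Y, Z} = {I, J, K}" "I \<subset> J" "J \<subset> K"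
  using assms by (metis insert_commute psubsetI)

lemma exchange_closed_card_3:
  assumes "exchange_closed \<D>" "card \<D> = 3" "\<forall>D\<in>\<D>. down_set D"
  obtains I J K where "\<D> = {I, J, K}" "order_triangle I J K"
proof -
  obtain X Y Z where XYZ: "\<D> = {X, Y, Z}" "X \<noteq> Y" "Y \<noteq> Z" "X \<noteq> Z"
    using assms(2) by (auto simp: card_3_iff)
  have "A \<subseteq> B \<or> B \<subseteq> A" if "A \<in> \<D>" "B \<in> \<D>" for A B
    using exchange_closed_comparable assms that by simp
  then have "X \<subseteq> Y \<or> Y \<subseteq> X" "Y \<subseteq> Z \<or> Z \<subseteq> Y" "X \<subseteq> Z \<or> Z \<subseteq> X"
    unfolding XYZ(1) by simp_all
  then obtain I J K where "{X, Y, Z} = {I, J, K}" "I \<subset> J" "J \<subset> K"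
    by (rule sorted_chain3[OF XYZ(2-4)])
  moreover from this have "order_triangle I J K"
    using exchange_closed_order_triangle assms(1,3) XYZ(1) by auto
  ultimately show ?thesis
    using that XYZ(1) by simp
qed

lemma triangular_2face_order_polytope:
  assumes "F \<in> triangular_2faces (order_polytope (rank_order r))"
  obtains I J K where "order_triangle I J K" "F = convex hull (char_vec ` {I, J, K})"
proof -
  define \<D> where "\<D> = {D. down_set D \<and> char_vec D \<in> F}"
  have face: "F face_of order_polytope (rank_order r)"
    and three: "card {v. v extreme_point_of F} = 3"
    using assms by (auto simp: triangular_2faces_def)
  have ext: "{v. v extreme_point_of F} = char_vec ` \<D>"
    unfolding \<D>_def by (rule extreme_points_face_order_polytope[OF face])
  have "card (char_vec ` \<D>) = card \<D>"
    by (rule card_image[OF inj_on_subset[OF inj_char_vec subset_UNIV]])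
  then have "card \<D> = 3"
    using three unfolding ext by simp
  moreover have "exchange_closed \<D>" "\<forall>D\<in>\<D>. down_set D"
    unfolding \<D>_def using exchange_closed_face[OF face] by auto
  ultimately obtain I J K where "\<D> = {I, J, K}" "order_triangle I J K"
    using exchange_closed_card_3 by metis
  moreover have "F = convex hull (char_vec ` \<D>)"
    using face_order_polytope_eq_convex_hull[OF face] unfolding ext .
  ultimately show ?thesis
    using that by simp
qed

section \<open>Triangular 2-faces of the chain polytope\<close>

lemma chain_polytope_nonneg: "x \<in> chain_polytope (rank_order r) \<Longrightarrow> 0 \<le> x$i"
  by (simp add: mem_chain_polytope_rank_order)

lemma chain_polytope_pair:
  assumes "x \<in> chain_polytope (rank_order r)" "r a \<noteq> r b"
  shows "x$a + x$b \<le> 1"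
proof -
  have "inj_on r {a, b}" "a \<noteq> b"
    using assms(2) by auto
  then have "(\<Sum>i\<in>{a, b}. x$i) \<le> 1"
    using assms(1) unfolding mem_chain_polytope_rank_order by blast
  then show ?thesis
    using \<open>a \<noteq> b\<close> by simp
qed

lemma char_vec_level_in_chain_polytope:
  assumes "X \<subseteq> level j"
  shows "char_vec X \<in> chain_polytope (rank_order r)"
  unfolding mem_chain_polytope_rank_order
proof (intro conjI allI impI)
  fix C assume "inj_on r C"
  then have "a = b" if "a \<in> C \<inter> X" "b \<in> C \<inter> X" for a b
    using that assms by (auto simp: level_def inj_on_def)
  then have "card (C \<inter> X) \<le> 1"
    by (simp add: card_le_Suc0_iff_eq)
  then show "(\<Sum>i\<in>C. char_vec X $ i) \<le> 1"
    by (simp add: sum.If_cases)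
qed simp

definition rank_separated :: "'n set set \<Rightarrow> bool" where
  "rank_separated \<B> \<longleftrightarrow> (\<forall>B\<in>\<B>. \<forall>C\<in>\<B>. \<forall>p\<in>B. \<forall>q\<in>C. r p = r q \<longrightarrow> B = C)"

lemma chain_polytope_transversal:
  assumes "x \<in> chain_polytope (rank_order r)" "rank_separated \<B>" "\<And>B. B \<in> \<B> \<Longrightarrow> m B \<in> B"
  shows "(\<Sum>B\<in>\<B>. x$(m B)) \<le> 1"
proof -
  have sep: "B = C" if "B \<in> \<B>" "C \<in> \<B>" "r (m B) = r (m C)" for B C
    using assms(2,3) that unfolding rank_separated_def by blast
  have "inj_on m \<B>"
    by (rule inj_onI) (use sep in simp)
  moreover have "inj_on r (m ` \<B>)"
    by (rule inj_onI) (use sep in blast)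
  ultimately show ?thesis
    using assms(1) unfolding mem_chain_polytope_rank_order
    by (simp add: sum.reindex[symmetric, unfolded comp_def])
qed

definition mean :: "'n set \<Rightarrow> real^'n \<Rightarrow> real" where
  "mean B x = (\<Sum>p\<in>B. x$p) / card B"

lemma finite_has_max_point:
  fixes f :: "'a \<Rightarrow> 'b::linorder"
  assumes "finite B" "B \<noteq> {}"
  obtains a where "a \<in> B" "\<forall>p\<in>B. f p \<le> f a"
proof -
  have "Max (f ` B) \<in> f ` B"
    using assms by simp
  then obtain a where "a \<in> B" "f a = Max (f ` B)"
    by (metis imageE)
  then show ?thesis
    using that assms by simp
qed

lemma mean_le:
  fixes x :: "real^'n"
  assumes "B \<noteq> {}" "\<forall>p\<in>B. x$p \<le> M"
  shows "mean B x \<le> M"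
proof -
  have "(\<Sum>p\<in>B. x$p) \<le> card B * M"
    using assms(2) sum_bounded_above[of B "\<lambda>p. x$p" M] by simp
  moreover have "0 < card B"
    using assms(1) by (simp add: card_gt_0_iff)
  ultimately show ?thesis
    by (simp add: mean_def pos_divide_le_eq mult.commute)
qed

lemma mean_eq_max_imp_const:
  fixes x :: "real^'n"
  assumes "B \<noteq> {}" "\<forall>p\<in>B. x$p \<le> M" "mean B x = M" "p \<in> B"
  shows "x$p = M"
proof -
  have "(\<Sum>p\<in>B. x$p) = card B * M"
    using assms(1,3) by (simp add: mean_def card_gt_0_iff divide_eq_eq)
  then have "(\<Sum>q\<in>B. M - x$q) = 0"
    by (simp add: sum_subtractf)
  then have "\<forall>q\<in>B. M - x$q = 0"
    using assms(2) by (subst (asm) sum_nonneg_eq_0_iff) auto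
  then show ?thesis
    using assms(4) by simp
qed

lemma chain_polytope_sum_means:
  assumes x: "x \<in> chain_polytope (rank_order r)" and "{} \<notin> \<B>" "rank_separated \<B>"
  shows "(\<Sum>B\<in>\<B>. mean B x) \<le> 1"
    and "(\<Sum>B\<in>\<B>. mean B x) = 1 \<Longrightarrow> B \<in> \<B> \<Longrightarrow> p \<in> B \<Longrightarrow> x$p = mean B x"
proof -
  have nonempty: "B \<noteq> {}" if "B \<in> \<B>" for B
    using that assms(2) by blast
  have "\<exists>a\<in>B. \<forall>p\<in>B. x$p \<le> x$a" if "B \<in> \<B>" for B
    using finite_has_max_point[OF finite nonempty[OF that]] by blast
  then obtain m where m: "\<And>B. B \<in> \<B> \<Longrightarrow> m B \<in> B \<and> (\<forall>p\<in>B. x$p \<le> x$(m B))"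
    by metis
  have max_sum: "(\<Sum>B\<in>\<B>. x$(m B)) \<le> 1"
    using chain_polytope_transversal[OF x assms(3)] m by blast
  have mean_le_m: "mean B x \<le> x$(m B)" if "B \<in> \<B>" for B
    using mean_le[OF nonempty[OF that]] m[OF that] by blast
  then show "(\<Sum>B\<in>\<B>. mean B x) \<le> 1"
    using max_sum sum_mono[of \<B> "\<lambda>B. mean B x" "\<lambda>B. x$(m B)"] by simp
  assume "(\<Sum>B\<in>\<B>. mean B x) = 1" "B \<in> \<B>" "p \<in> B"
  then have "(\<Sum>C\<in>\<B>. x$(m C) - mean C x) \<le> 0"
    using max_sum by (simp add: sum_subtractf)
  moreover have "0 \<le> x$(m C) - mean C x" if "C \<in> \<B>" for C
    using mean_le_m[OF that] by simp
  ultimately have "\<forall>C\<in>\<B>. x$(m C) - mean C x = 0"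
    using sum_nonneg_eq_0_iff[of \<B> "\<lambda>C. x$(m C) - mean C x"] sum_nonneg[of \<B> "\<lambda>C. x$(m C) - mean C x"]
    by simp
  then have "mean B x = x$(m B)"
    using \<open>B \<in> \<B>\<close> by simp
  moreover have "x$p = x$(m B)"
    using mean_eq_max_imp_const[OF nonempty _ _ \<open>p \<in> B\<close>] m \<open>B \<in> \<B>\<close> calculation by blast
  ultimately show "x$p = mean B x"
    by simp
qed

text \<open>
  Averaging the chain inequalities over all transversals of rank-separated blocks gives
  (\<Sum>B\<in>\<B>. mean B x) \<le> 1; subtracting the coordinates in R yields a supporting hyperplane.
\<close>
definition block_functional :: "'n set set \<Rightarrow> 'n set \<Rightarrow> real^'n" where
  "block_functional \<B> R = (\<Sum>B\<in>\<B>. (1 / card B) *\<^sub>R char_vec B) - char_vec R"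

lemma inner_block_functional:
  "block_functional \<B> R \<bullet> x = (\<Sum>B\<in>\<B>. mean B x) - (\<Sum>p\<in>R. x$p)"
  by (simp add: block_functional_def inner_diff_left inner_sum_left inner_char_vec mean_def)

lemma block_functional_char_vec:
  assumes "{} \<notin> \<B>" "B\<^sub>0 \<in> \<B>" "B\<^sub>0 \<subseteq> T" "\<forall>B\<in>\<B> - {B\<^sub>0}. B \<inter> T = {}" "T \<inter> R = {}"
  shows "block_functional \<B> R \<bullet> char_vec T = 1"
proof -
  have "mean B (char_vec T) = (if B = B\<^sub>0 then 1 else 0)" if "B \<in> \<B>" for B
  proof (cases "B = B\<^sub>0")
    case True
    then have "(\<Sum>p\<in>B. char_vec T $ p) = card B" "card B \<noteq> 0"
      using assms(1-3) that by (auto simp: subset_iff)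
    then show ?thesis
      using True by (simp add: mean_def)
  next
    case False
    then have "B \<inter> T = {}"
      using assms(4) that by blast
    then have "(\<Sum>p\<in>B. char_vec T $ p) = 0"
      by (auto intro!: sum.neutral)
    then show ?thesis
      using False by (simp add: mean_def)
  qed
  moreover have "(\<Sum>p\<in>R. char_vec T $ p) = 0"
    using assms(5) by (auto intro!: sum.neutral)
  ultimately show ?thesis
    using assms(2) by (simp add: inner_block_functional)
qed

lemma chain_polytope_block_face:
  assumes x: "x \<in> chain_polytope (rank_order r)" and "{} \<notin> \<B>" "rank_separated \<B>"
  shows "block_functional \<B> R \<bullet> x \<le> 1"
    and "block_functional \<B> R \<bullet> x = 1 \<Longrightarrow>
      (\<forall>B\<in>\<B>. \<forall>p\<in>B. x$p = mean B x) \<and> (\<forall>p\<in>R. x$p = 0) \<and> (\<Sum>B\<in>\<B>. mean B x) = 1"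
proof -
  have R: "0 \<le> (\<Sum>p\<in>R. x$p)"
    using chain_polytope_nonneg[OF x] by (simp add: sum_nonneg)
  have means: "(\<Sum>B\<in>\<B>. mean B x) \<le> 1"
    by (rule chain_polytope_sum_means(1)[OF assms])
  then show "block_functional \<B> R \<bullet> x \<le> 1"
    using R by (simp add: inner_block_functional)
  assume "block_functional \<B> R \<bullet> x = 1"
  then have sums: "(\<Sum>B\<in>\<B>. mean B x) = 1" "(\<Sum>p\<in>R. x$p) = 0"
    using means R by (simp_all add: inner_block_functional)
  then have "\<forall>p\<in>R. x$p = 0"
    using chain_polytope_nonneg[OF x] by (simp add: sum_nonneg_eq_0_iff)
  then show "(\<forall>B\<in>\<B>. \<forall>p\<in>B. x$p = mean B x) \<and> (\<forall>p\<in>R. x$p = 0) \<and> (\<Sum>B\<in>\<B>. mean B x) = 1"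
    using chain_polytope_sum_means(2)[OF assms sums(1)] sums(1) by blast
qed

lemma triangular_2face_chain_polytope_blocks:
  assumes "{} \<notin> \<B>" "rank_separated \<B>" "T\<^sub>1 \<noteq> T\<^sub>2" "T\<^sub>2 \<noteq> T\<^sub>3" "T\<^sub>1 \<noteq> T\<^sub>3"
    and vertices: "\<And>T. T \<in> {T\<^sub>1, T\<^sub>2, T\<^sub>3} \<Longrightarrow>
      char_vec T \<in> chain_polytope (rank_order r) \<and> block_functional \<B> R \<bullet> char_vec T = 1"
    and face_points: "\<And>y. y \<in> chain_polytope (rank_order r) \<Longrightarrow> \<forall>B\<in>\<B>. \<forall>p\<in>B. y$p = mean B y \<Longrightarrow>
      \<forall>p\<in>R. y$p = 0 \<Longrightarrow> (\<Sum>B\<in>\<B>. mean B y) = 1 \<Longrightarrow> y \<in> convex hull (char_vec ` {T\<^sub>1, T\<^sub>2, T\<^sub>3})"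
  shows "convex hull (char_vec ` {T\<^sub>1, T\<^sub>2, T\<^sub>3}) \<in> triangular_2faces (chain_polytope (rank_order r))"
proof -
  let ?C = "chain_polytope (rank_order r)"
  have "convex hull {char_vec T\<^sub>1, char_vec T\<^sub>2, char_vec T\<^sub>3} \<in> triangular_2faces ?C"
  proof (rule triangular_2face_of_supporting_hyperplane[where w = "block_functional \<B> R" and d = 1])
    show "convex ?C"
      by (rule convex_chain_polytope)
    show "char_vec T\<^sub>1 \<noteq> char_vec T\<^sub>2" "char_vec T\<^sub>2 \<noteq> char_vec T\<^sub>3" "char_vec T\<^sub>1 \<noteq> char_vec T\<^sub>3"
      using assms(3-5) inj_char_vec by (auto dest: injD)
    show "v$i = 0 \<or> v$i = 1" if "v \<in> {char_vec T\<^sub>1, char_vec T\<^sub>2, char_vec T\<^sub>3}" for v i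
      using that by auto
    show "{char_vec T\<^sub>1, char_vec T\<^sub>2, char_vec T\<^sub>3} \<subseteq> ?C"
      using vertices by blast
    show "block_functional \<B> R \<bullet> char_vec T\<^sub>1 = 1" "block_functional \<B> R \<bullet> char_vec T\<^sub>2 = 1"
      "block_functional \<B> R \<bullet> char_vec T\<^sub>3 = 1"
      using vertices by blast+
    show "block_functional \<B> R \<bullet> y \<le> 1" if "y \<in> ?C" for y
      using chain_polytope_block_face(1)[OF that assms(1,2)] .
    show "y \<in> convex hull {char_vec T\<^sub>1, char_vec T\<^sub>2, char_vec T\<^sub>3}"
      if "y \<in> ?C" "block_functional \<B> R \<bullet> y = 1" for y
    proof -
      have "(\<forall>B\<in>\<B>. \<forall>p\<in>B. y$p = mean B y) \<and> (\<forall>p\<in>R. y$p = 0) \<and> (\<Sum>B\<in>\<B>. mean B y) = 1"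
        by (rule chain_polytope_block_face(2)[OF that(1) assms(1,2) that(2)])
      then have "y \<in> convex hull (char_vec ` {T\<^sub>1, T\<^sub>2, T\<^sub>3})"
        using face_points[OF that(1)] by blast
      then show ?thesis
        by simp
    qed
  qed
  then show ?thesis
    by simp
qed

lemma chain_polytope_triangle_singletons:
  assumes "r p \<noteq> r q"
  shows "convex hull (char_vec ` {{}, {p}, {q}}) \<in> triangular_2faces (chain_polytope (rank_order r))"
proof -
  let ?C = "chain_polytope (rank_order r)"
  define w where "w = - char_vec (- {p, q})"
  have "p \<noteq> q"
    using assms by auto
  have w: "w \<bullet> x = - (\<Sum>i\<in>- {p, q}. x$i)" for x
    by (simp add: w_def inner_char_vec)
  have "{char_vec {}, char_vec {p}, char_vec {q}} \<subseteq> ?C"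
    by (auto intro!: char_vec_level_in_chain_polytope simp: level_def)
  moreover have "w \<bullet> x \<le> 0" if "x \<in> ?C" for x
    using chain_polytope_nonneg[OF that] by (simp add: w sum_nonneg)
  moreover have "w \<bullet> char_vec {} = 0" "w \<bullet> char_vec {p} = 0" "w \<bullet> char_vec {q} = 0"
    by (auto simp: w intro!: sum.neutral)
  moreover have "x \<in> convex hull {char_vec {}, char_vec {p}, char_vec {q}}"
    if x: "x \<in> ?C" "w \<bullet> x = 0" for x
  proof -
    have "\<forall>i\<in>- {p, q}. x$i = 0"
      using x chain_polytope_nonneg[OF x(1)] by (simp add: w sum_nonneg_eq_0_iff)
    then have "x = (1 - x$p - x$q) *\<^sub>R char_vec {} + x$p *\<^sub>R char_vec {p} + x$q *\<^sub>R char_vec {q}"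
      using \<open>p \<noteq> q\<close> by (auto simp: vec_eq_iff)
    moreover have "0 \<le> x$p" "0 \<le> x$q" "x$p + x$q \<le> 1"
      using chain_polytope_nonneg[OF x(1)] chain_polytope_pair[OF x(1) assms] by auto
    ultimately show ?thesis
      unfolding convex_hull_3 by (intro CollectI exI[of _ "1 - x$p - x$q"] exI[of _ "x$p"] exI[of _ "x$q"]) auto
  qed
  ultimately show ?thesis
    using \<open>p \<noteq> q\<close> inj_char_vec
    by (auto intro!: triangular_2face_of_supporting_hyperplane convex_chain_polytope dest: injD)
qed

lemma chain_polytope_triangle_two_levels:
  assumes "X \<noteq> {}" "W \<noteq> {}" "x \<notin> X" "insert x X \<subseteq> level i" "W \<subseteq> level j" "i \<noteq> j"
  shows "convex hull (char_vec ` {X, insert x X, W}) \<in> triangular_2faces (chain_polytope (rank_order r))"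
proof (rule triangular_2face_chain_polytope_blocks[where \<B> = "{X, W}" and R = "- (insert x X \<union> W)"])
  have rank: "\<And>p. p \<in> insert x X \<Longrightarrow> r p = i" "\<And>p. p \<in> W \<Longrightarrow> r p = j"
    using assms(4,5) by (auto simp: level_def)
  then have disjoint: "insert x X \<inter> W = {}"
    using assms(6) by fastforce
  then show "X \<noteq> W" "X \<noteq> insert x X" "insert x X \<noteq> W"
    using assms(1,3) by blast+
  show "{} \<notin> {X, W}"
    using assms(1,2) by blast
  show "rank_separated {X, W}"
    using rank assms(6) by (auto simp: rank_separated_def)
  show "char_vec T \<in> chain_polytope (rank_order r) \<and>
      block_functional {X, W} (- (insert x X \<union> W)) \<bullet> char_vec T = 1" if "T \<in> {X, insert x X, W}" for T
    using that assms disjoint char_vec_level_in_chain_polytope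
    by (auto intro: block_functional_char_vec[where B\<^sub>0 = X] block_functional_char_vec[where B\<^sub>0 = W])
  show "y \<in> convex hull (char_vec ` {X, insert x X, W})"
    if y: "y \<in> chain_polytope (rank_order r)" "\<forall>B\<in>{X, W}. \<forall>p\<in>B. y$p = mean B y"
      "\<forall>p\<in>- (insert x X \<union> W). y$p = 0" "(\<Sum>B\<in>{X, W}. mean B y) = 1" for y
  proof -
    define a where "a = mean X y"
    define b where "b = mean W y"
    have "a + b = 1"
      using y(4) \<open>X \<noteq> W\<close> by (simp add: a_def b_def)
    obtain w\<^sub>0 where "w\<^sub>0 \<in> W"
      using assms(2) by blast
    then have "y$w\<^sub>0 = b"
      using y(2) by (simp add: b_def)
    then have "y$x + b \<le> 1"
      using chain_polytope_pair[OF y(1), of x w\<^sub>0] rank \<open>w\<^sub>0 \<in> W\<close> assms(6) by auto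
    moreover have "0 \<le> y$x" "0 \<le> y$w\<^sub>0"
      using chain_polytope_nonneg[OF y(1)] by simp_all
    ultimately have coeffs: "0 \<le> a - y$x" "0 \<le> y$x" "0 \<le> b"
      using \<open>a + b = 1\<close> \<open>y$w\<^sub>0 = b\<close> by linarith+
    have "y = (a - y$x) *\<^sub>R char_vec X + y$x *\<^sub>R char_vec (insert x X) + b *\<^sub>R char_vec W"
      using y(2,3) disjoint assms(3) by (auto simp: vec_eq_iff a_def b_def)
    then show ?thesis
      unfolding image_insert image_empty convex_hull_3 using coeffs \<open>a + b = 1\<close>
      by (intro CollectI exI[of _ "a - y$x"] exI[of _ "y$x"] exI[of _ b]) auto
  qed
qed

lemma chain_polytope_triangle_three_levels:
  assumes "X \<noteq> {}" "Y \<noteq> {}" "Z \<noteq> {}" "X \<subseteq> level i" "Y \<subseteq> level j" "Z \<subseteq> level k"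
    and "i \<noteq> j" "i \<noteq> k" "j \<noteq> k"
  shows "convex hull (char_vec ` {X, Y, Z}) \<in> triangular_2faces (chain_polytope (rank_order r))"
proof (rule triangular_2face_chain_polytope_blocks[where \<B> = "{X, Y, Z}" and R = "- (X \<union> Y \<union> Z)"])
  have rank: "\<And>p. p \<in> X \<Longrightarrow> r p = i" "\<And>p. p \<in> Y \<Longrightarrow> r p = j" "\<And>p. p \<in> Z \<Longrightarrow> r p = k"
    using assms(4-6) by (auto simp: level_def)
  then have disjoint: "X \<inter> Y = {}" "X \<inter> Z = {}" "Y \<inter> Z = {}"
    using assms(7-9) by fastforce+
  then show distinct: "X \<noteq> Y" "Y \<noteq> Z" "X \<noteq> Z"
    using assms(1-3) by blast+
  show "{} \<notin> {X, Y, Z}"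
    using assms(1-3) by blast
  show "rank_separated {X, Y, Z}"
    using rank assms(7-9) by (auto simp: rank_separated_def)
  show "char_vec T \<in> chain_polytope (rank_order r) \<and>
      block_functional {X, Y, Z} (- (X \<union> Y \<union> Z)) \<bullet> char_vec T = 1" if "T \<in> {X, Y, Z}" for T
    using that assms disjoint char_vec_level_in_chain_polytope
    by (auto intro: block_functional_char_vec[where B\<^sub>0 = X] block_functional_char_vec[where B\<^sub>0 = Y] block_functional_char_vec[where B\<^sub>0 = Z])
  show "y \<in> convex hull (char_vec ` {X, Y, Z})"
    if y: "y \<in> chain_polytope (rank_order r)" "\<forall>B\<in>{X, Y, Z}. \<forall>p\<in>B. y$p = mean B y"
      "\<forall>p\<in>- (X \<union> Y \<union> Z). y$p = 0" "(\<Sum>B\<in>{X, Y, Z}. mean B y) = 1" for y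
  proof -
    have nonneg: "0 \<le> mean B y" if B: "B \<in> {X, Y, Z}" for B
    proof -
      obtain p where "p \<in> B"
        using B assms(1-3) by blast
      then have "y$p = mean B y"
        using y(2) B by blast
      then show ?thesis
        using chain_polytope_nonneg[OF y(1), of p] by simp
    qed
    have "mean X y + mean Y y + mean Z y = 1"
      using y(4) distinct by (simp add: add.assoc)
    moreover have "0 \<le> mean X y" "0 \<le> mean Y y" "0 \<le> mean Z y"
      using nonneg by simp_all
    moreover have "y = mean X y *\<^sub>R char_vec X + mean Y y *\<^sub>R char_vec Y + mean Z y *\<^sub>R char_vec Z"
      using y(2,3) disjoint by (auto simp: vec_eq_iff)
    ultimately show ?thesis
      unfolding image_insert image_empty convex_hull_3 by blast
  qed
qed

definition chain_triangle :: "'n set set \<Rightarrow> bool" where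
  "chain_triangle S \<longleftrightarrow>
     (\<exists>p q. S = {{}, {p}, {q}} \<and> r p \<noteq> r q) \<or>
     (\<exists>X x W i j. S = {X, insert x X, W} \<and> X \<noteq> {} \<and> W \<noteq> {} \<and> x \<notin> X \<and>
        insert x X \<subseteq> level i \<and> W \<subseteq> level j \<and> i \<noteq> j) \<or>
     (\<exists>X Y Z i j k. S = {X, Y, Z} \<and> X \<noteq> {} \<and> Y \<noteq> {} \<and> Z \<noteq> {} \<and>
        X \<subseteq> level i \<and> Y \<subseteq> level j \<and> Z \<subseteq> level k \<and> i \<noteq> j \<and> i \<noteq> k \<and> j \<noteq> k)"

lemma chain_triangleI_singletons: "r p \<noteq> r q \<Longrightarrow> chain_triangle {{}, {p}, {q}}"
  unfolding chain_triangle_def by (intro disjI1 exI[of _ p] exI[of _ q]) simp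

lemma chain_triangleI_two_levels:
  "X \<noteq> {} \<Longrightarrow> W \<noteq> {} \<Longrightarrow> x \<notin> X \<Longrightarrow> insert x X \<subseteq> level i \<Longrightarrow> W \<subseteq> level j \<Longrightarrow> i \<noteq> j \<Longrightarrow>
    chain_triangle {X, insert x X, W}"
  unfolding chain_triangle_def
  by (intro disjI2 disjI1 exI[of _ X] exI[of _ x] exI[of _ W] exI[of _ i] exI[of _ j]) simp

lemma chain_triangleI_three_levels:
  "X \<noteq> {} \<Longrightarrow> Y \<noteq> {} \<Longrightarrow> Z \<noteq> {} \<Longrightarrow> X \<subseteq> level i \<Longrightarrow> Y \<subseteq> level j \<Longrightarrow> Z \<subseteq> level k \<Longrightarrow>
    i \<noteq> j \<Longrightarrow> i \<noteq> k \<Longrightarrow> j \<noteq> k \<Longrightarrow> chain_triangle {X, Y, Z}"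
  unfolding chain_triangle_def
  by (intro disjI2 exI[of _ X] exI[of _ Y] exI[of _ Z] exI[of _ i] exI[of _ j] exI[of _ k]) simp

lemma chain_triangle_face:
  assumes "chain_triangle S"
  shows "convex hull (char_vec ` S) \<in> triangular_2faces (chain_polytope (rank_order r))"
  using assms unfolding chain_triangle_def
proof (elim disjE exE conjE)
  fix p q assume "S = {{}, {p}, {q}}" "r p \<noteq> r q"
  then show ?thesis
    using chain_polytope_triangle_singletons by simp
next
  fix X x W i j assume "S = {X, insert x X, W}" "X \<noteq> {}" "W \<noteq> {}" "x \<notin> X"
    "insert x X \<subseteq> level i" "W \<subseteq> level j" "i \<noteq> j"
  then show ?thesis
    using chain_polytope_triangle_two_levels by simp
next
  fix X Y Z i j k assume "S = {X, Y, Z}" "X \<noteq> {}" "Y \<noteq> {}" "Z \<noteq> {}"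
    "X \<subseteq> level i" "Y \<subseteq> level j" "Z \<subseteq> level k" "i \<noteq> j" "i \<noteq> k" "j \<noteq> k"
  then show ?thesis
    using chain_polytope_triangle_three_levels by simp
qed

lemma maximals_insert_same_height:
  assumes "down_set A" "A \<subset> B" "A \<noteq> {}" "height A = height B" "is_singleton (B - A)"
  obtains x where "x \<notin> maximals A" "maximals B = insert x (maximals A)"
proof -
  obtain x where "B - A = {x}"
    using assms(5) by (auto simp: is_singleton_def)
  moreover have "maximals B = maximals A \<union> (B - A)"
    using maximals_same_height(2)[OF assms(1) _ assms(3,4)] assms(2) by blast
  ultimately show ?thesis
    using that[of x] by (auto simp: maximals_def)
qed

lemma chain_triangle_maximals:
  assumes "down_set A" "down_set B" "A \<subset> B" "B \<subset> C" "A \<noteq> {}"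
    and "height A < height C"
    and "height A = height B \<Longrightarrow> is_singleton (B - A)"
    and "height B = height C \<Longrightarrow> is_singleton (C - B)"
  shows "chain_triangle {maximals A, maximals B, maximals C}"
proof -
  have "B \<noteq> {}"
    using assms(3,5) by blast
  have ne: "maximals A \<noteq> {}" "maximals B \<noteq> {}" "maximals C \<noteq> {}"
    using assms(3-5) by (auto intro!: maximals_nonempty)
  have levels: "maximals A \<subseteq> level (height A)" "maximals B \<subseteq> level (height B)"
    "maximals C \<subseteq> level (height C)"
    by (rule maximals_subset_level)+
  have "height A \<le> height B" "height B \<le> height C"
    using assms(3-5) by (auto intro!: height_mono)
  then consider "height A = height B" | "height B = height C"
    | "height A < height B" "height B < height C"
    by linarith
  then show ?thesis
  proof cases
    case 1
    obtain x where "x \<notin> maximals A" "maximals B = insert x (maximals A)"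
      using maximals_insert_same_height[OF assms(1,3,5) 1 assms(7)[OF 1]] by blast
    then show ?thesis
      using chain_triangleI_two_levels[OF ne(1,3) _ _ levels(3)] levels(2) 1 assms(6) by simp
  next
    case 2
    obtain z where "z \<notin> maximals B" "maximals C = insert z (maximals B)"
      using maximals_insert_same_height[OF assms(2,4) \<open>B \<noteq> {}\<close> 2 assms(8)[OF 2]] by blast
    moreover have "{maximals A, maximals B, insert z (maximals B)} =
        {maximals B, insert z (maximals B), maximals A}"
      by blast
    ultimately show ?thesis
      using chain_triangleI_two_levels[OF ne(2,1) _ _ levels(1)] levels(3) 2 assms(6) by simp
  next
    case 3
    then show ?thesis
      using chain_triangleI_three_levels[OF ne levels] by simp
  qed
qed

section \<open>From order triangles to chain triangles\<close>

text \<open>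
  Recovers an order triangle from the chain of down-sets representing it (see represented_by);
  the last three branches undo the three ways of replacing the bottom set {} by a nonempty one.
\<close>
definition order_triangle_of :: "'n set \<Rightarrow> 'n set \<Rightarrow> 'n set \<Rightarrow> 'n set \<times> 'n set \<times> 'n set" where
  "order_triangle_of A B C =
     (if order_triangle A B C then (A, B, C)
      else if rank_connected (C - B) then ({}, B, C)
      else if height A = height B then ({}, (B - A) \<union> below (height B), C)
      else ({}, A, C))"

definition decode :: "'n set set \<Rightarrow> 'n set \<times> 'n set \<times> 'n set" where
  "decode S = (let \<C> = down_closure ` S in
     order_triangle_of (\<Inter>\<C>) (THE B. B \<in> \<C> \<and> B \<noteq> \<Inter>\<C> \<and> B \<noteq> \<Union>\<C>) (\<Union>\<C>))"

lemma decode_maximals: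
  assumes "down_set A" "down_set B" "down_set C" "A \<subset> B" "B \<subset> C"
  shows "decode {maximals A, maximals B, maximals C} = order_triangle_of A B C"
proof -
  have "down_closure ` {maximals A, maximals B, maximals C} = {A, B, C}"
    using assms(1-3) by (simp add: down_closure_maximals)
  moreover have "\<Inter>{A, B, C} = A" "\<Union>{A, B, C} = C"
    using assms(4,5) by auto
  moreover have "(THE D. D \<in> {A, B, C} \<and> D \<noteq> A \<and> D \<noteq> C) = B"
    using assms(4,5) by (intro the_equality) auto
  ultimately show ?thesis
    by (simp add: decode_def)
qed

definition maximal_layers :: "'n set \<times> 'n set \<times> 'n set \<Rightarrow> 'n set set" where
  "maximal_layers c = (case c of (A, B, C) \<Rightarrow> {maximals A, maximals B, maximals C})"

text \<open>
  Since t is recovered from the top layers of any representative, choosing representatives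
  injects order triangles into chain triangles.
\<close>
definition represented_by :: "'n set \<times> 'n set \<times> 'n set \<Rightarrow> 'n set \<times> 'n set \<times> 'n set \<Rightarrow> bool" where
  "represented_by t c \<longleftrightarrow> (case c of (A, B, C) \<Rightarrow>
     down_set A \<and> down_set B \<and> down_set C \<and> A \<subset> B \<and> B \<subset> C \<and>
     chain_triangle (maximal_layers c) \<and> order_triangle_of A B C = t)"

lemma represented_chain_triangle: "represented_by t c \<Longrightarrow> chain_triangle (maximal_layers c)"
  by (auto simp: represented_by_def split: prod.splits)

lemma decode_represented: "represented_by t c \<Longrightarrow> decode (maximal_layers c) = t"
  by (auto simp: represented_by_def maximal_layers_def decode_maximals split: prod.splits)

lemma represented_nonempty_bottom:
  assumes ot: "order_triangle I J K" and "I \<noteq> {}"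
  shows "represented_by (I, J, K) (I, J, K)"
proof -
  have I: "down_set I" "I \<subset> J" "rank_connected (J - I)" and J: "down_set J" "J \<subset> K" "rank_connected (K - J)"
    and pair: "\<exists>a\<in>J - I. \<exists>b\<in>K - J. r a < r b"
    using ot by (auto simp: order_triangle_def)
  have "J \<noteq> {}"
    using I(2) assms(2) by blast
  have mono: "height I \<le> height J" "height J \<le> height K"
    using I(2) J(2) \<open>J \<noteq> {}\<close> assms(2) by (auto intro!: height_mono)
  have "height I < height K"
  proof (rule ccontr)
    assume "\<not> height I < height K"
    then have same: "height I = height J" "height J = height K"
      using mono by linarith+
    have "J - I \<subseteq> level (height J)"
      using maximals_same_height(1)[OF I(1) _ assms(2) same(1)] I(2) by blast
    moreover have "K - J \<subseteq> level (height K)"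
      using maximals_same_height(1)[OF J(1) _ \<open>J \<noteq> {}\<close> same(2)] J(2) by blast
    ultimately have "J - I \<subseteq> level (height K)" "K - J \<subseteq> level (height K)"
      using same by simp_all
    then show False
      using pair by (fastforce simp: level_def)
  qed
  then have "chain_triangle {maximals I, maximals J, maximals K}"
    using I J assms(2) \<open>J \<noteq> {}\<close>
    by (intro chain_triangle_maximals is_singleton_diff_same_height) auto
  moreover have "down_set K"
    using ot by (simp add: order_triangle_def)
  ultimately show ?thesis
    using ot I J by (simp add: represented_by_def maximal_layers_def order_triangle_of_def)
qed

lemma represented_empty_singletons:
  assumes ot: "order_triangle {} J K"
    and "is_singleton (maximals J)" "is_singleton (maximals K)" "height J < height K"
  shows "represented_by ({}, J, K) ({}, J, K)"
proof -
  obtain y z where "maximals J = {y}" "maximals K = {z}"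
    using assms(2,3) by (auto simp: is_singleton_def)
  moreover have "maximals {} = {}"
    by (simp add: maximals_def)
  moreover have "r y = height J" "r z = height K"
    using calculation maximals_subset_level[of J] maximals_subset_level[of K] by (auto simp: level_def)
  ultimately have "chain_triangle {maximals {}, maximals J, maximals K}"
    using chain_triangleI_singletons[of y z] assms(4) by simp
  then show ?thesis
    using ot by (simp add: represented_by_def maximal_layers_def order_triangle_of_def order_triangle_def)
qed

lemma no_rank_increase_same_height:
  assumes "down_set J" "J \<noteq> {}" "J \<subseteq> K" "height J = height K"
  shows "\<not> (\<exists>a\<in>J - below (height J). \<exists>b\<in>K - J. r a < r b)"
proof -
  have "J - below (height J) \<subseteq> level (height J)"
    using diff_below_height[OF assms(1,2)] maximals_subset_level by simp
  moreover have "K - J \<subseteq> level (height J)"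
    using maximals_same_height(1)[OF assms(1,3,2,4)] assms(4) by simp
  ultimately show ?thesis
    by (fastforce simp: level_def)
qed

lemma represented_below_height:
  assumes ot: "order_triangle {} J K"
    and case_hyp: "height J = height K \<or> \<not> is_singleton (maximals J)"
  shows "represented_by ({}, J, K) (below (height J), J, K)"
proof -
  define j where "j = height J"
  have J: "down_set J" "J \<noteq> {}" "J \<subset> K" "rank_connected J" and K: "down_set K" "rank_connected (K - J)"
    and pair: "\<exists>a\<in>J. \<exists>b\<in>K - J. r a < r b"
    using ot by (auto simp: order_triangle_def)
  have top: "J - below j = maximals J" "maximals J \<subseteq> level j"
    unfolding j_def using diff_below_height[OF J(1,2)] maximals_subset_level by auto
  have no_pair: "\<not> (\<exists>a\<in>J - below j. \<exists>b\<in>K - J. r a < r b)" if "j = height K"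
    using no_rank_increase_same_height[OF J(1,2)] J(3) that unfolding j_def by blast
  have "below j \<noteq> {}"
  proof
    assume "below j = {}"
    then have "is_singleton (maximals J)"
      using J(4) top by (simp add: rank_connected_level)
    then show False
      using no_pair pair case_hyp \<open>below j = {}\<close> unfolding j_def by simp
  qed
  have "chain_triangle {maximals (below j), maximals J, maximals K}"
  proof (rule chain_triangle_maximals[OF down_set_below J(1) _ J(3) \<open>below j \<noteq> {}\<close>])
    show "below j \<subset> J"
      unfolding j_def by (rule below_height_psubset[OF J(1,2)])
    show "height (below j) < height K"
      using height_below_less[OF \<open>below j \<noteq> {}\<close>] height_mono[of J K] J(2,3) unfolding j_def by auto
    show "is_singleton (J - below j)" if "height (below j) = height J"
      using height_below_less[OF \<open>below j \<noteq> {}\<close>] that unfolding j_def by simp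
    show "is_singleton (K - J)" if "height J = height K"
      using is_singleton_diff_same_height[OF J(1) _ J(2) that K(2)] J(3) by blast
  qed
  moreover have "\<not> order_triangle (below j) J K"
  proof
    assume "order_triangle (below j) J K"
    then have "rank_connected (maximals J)" "\<exists>a\<in>J - below j. \<exists>b\<in>K - J. r a < r b"
      using top(1) by (auto simp: order_triangle_def)
    then show False
      using no_pair case_hyp top(2) unfolding j_def by (auto simp: rank_connected_level)
  qed
  ultimately show ?thesis
    using J K below_height_psubset[OF J(1,2)] down_set_below
    by (simp add: represented_by_def maximal_layers_def order_triangle_of_def j_def)
qed

lemma represented_below_top:
  assumes ot: "order_triangle {} J K" and "\<not> is_singleton (maximals K)"
    and between: "height J < r p" "r p < height K"
  shows "represented_by ({}, J, K) (J, below (height K), K)"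
proof -
  define k where "k = height K"
  have J: "down_set J" "J \<noteq> {}" "J \<subset> K" and K: "down_set K" "K \<noteq> {}"
    using ot by (auto simp: order_triangle_def)
  have top: "K - below k = maximals K" "maximals K \<subseteq> level k"
    unfolding k_def using diff_below_height[OF K] maximals_subset_level by auto
  have "p \<in> below k"
    using between(2) by (simp add: below_def k_def)
  then have "r p \<le> height (below k)" "height (below k) < k"
    using height_ge height_below_less by blast+
  have "J \<subset> below k"
  proof
    show "J \<subseteq> below k"
      using height_ge[where D = J] between by (force simp: below_def k_def)
    show "J \<noteq> below k"
      using height_ge[where p = p and D = J] between(1) \<open>p \<in> below k\<close> by auto
  qed
  have "chain_triangle {maximals J, maximals (below k), maximals K}"
  proof (rule chain_triangle_maximals[OF J(1) down_set_below \<open>J \<subset> below k\<close> _ J(2)])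
    show "below k \<subset> K"
      unfolding k_def by (rule below_height_psubset[OF K])
    show "height J < height K"
      using between by simp
    show "is_singleton (below k - J)" if "height J = height (below k)"
      using that between(1) \<open>r p \<le> height (below k)\<close> by simp
    show "is_singleton (K - below k)" if "height (below k) = height K"
      using that \<open>height (below k) < k\<close> by (simp add: k_def)
  qed
  moreover have "\<not> rank_connected (K - below k)"
    using top assms(2) by (simp add: rank_connected_level)
  moreover have "height J \<noteq> height (below k)"
    using between(1) \<open>r p \<le> height (below k)\<close> by simp
  ultimately show ?thesis
    using J K \<open>J \<subset> below k\<close> below_height_psubset[OF K] down_set_below
    by (simp add: represented_by_def maximal_layers_def order_triangle_of_def order_triangle_def k_def)
qed

lemma diff_below_Un_level:
  assumes "down_set K" "K \<noteq> {}" "j < height K" "\<not> (\<exists>p. j < r p \<and> r p < height K)"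
  shows "K - (below j \<union> level j) = maximals K" "below j \<union> level j \<subset> K"
proof -
  show K_B: "K - (below j \<union> level j) = maximals K"
  proof
    show "K - (below j \<union> level j) \<subseteq> maximals K"
    proof
      fix p assume p: "p \<in> K - (below j \<union> level j)"
      then have "j < r p" "r p \<le> height K"
        using height_ge[of p K] by (auto simp: below_def level_def)
      then have "r p = height K"
        using assms(4) by (cases "r p < height K") auto
      then show "p \<in> maximals K"
        using p by (simp add: maximals_def level_def)
    qed
    show "maximals K \<subseteq> K - (below j \<union> level j)"
      using maximals_subset_level[of K] assms(3) by (auto simp: below_def level_def maximals_def)
  qed
  have "below j \<union> level j \<subseteq> below (height K)"
    using assms(3) by (auto simp: below_def level_def)
  then show "below j \<union> level j \<subset> K"
    using below_height_subset[OF assms(1,2)] K_B maximals_nonempty[OF assms(2)] by blast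
qed

lemma represented_split_level:
  assumes ot: "order_triangle {} J K" and y: "maximals J = {y}" and "\<not> is_singleton (maximals K)"
    and "height J < height K" and no_between: "\<not> (\<exists>p. height J < r p \<and> r p < height K)"
  shows "represented_by ({}, J, K) (below (height J) \<union> (level (height J) - {y}),
    below (height J) \<union> level (height J), K)"
proof -
  define j where "j = height J"
  define A where "A = below j \<union> (level j - {y})"
  define B where "B = below j \<union> level j"
  have J: "down_set J" "J \<noteq> {}" and K: "down_set K" "K \<noteq> {}" "rank_connected (K - J)"
    using ot by (auto simp: order_triangle_def)
  have "r y = j"
    using y maximals_subset_level[of J] by (auto simp: level_def j_def)
  have J_eq: "J = below j \<union> {y}"
    using down_set_decomp(1)[OF J] y by (simp add: j_def)
  have K_B: "K - B = maximals K" "B \<subset> K"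
    unfolding B_def j_def using diff_below_Un_level[OF K(1,2) assms(4) no_between] by simp_all
  then have not_connected: "\<not> rank_connected (K - B)"
    using maximals_subset_level[of K] assms(3) by (simp add: rank_connected_level)
  have "level j - {y} \<noteq> {}"
  proof
    assume "level j - {y} = {}"
    then have "B = J"
      using J_eq \<open>r y = j\<close> by (auto simp: B_def level_def)
    then show False
      using not_connected K(3) by simp
  qed
  moreover have "level j \<noteq> {}"
    using \<open>r y = j\<close> by (auto simp: level_def)
  ultimately have heights: "height A = j" "height B = j"
    unfolding A_def B_def by (auto intro!: height_below_Un_level)
  have "B - A = {y}" "A \<subset> B"
    using \<open>r y = j\<close> by (auto simp: A_def B_def level_def below_def)
  have down: "down_set A" "down_set B"
    unfolding A_def B_def by (auto intro: down_set_below_Un simp: level_def)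
  have "chain_triangle {maximals A, maximals B, maximals K}"
  proof (rule chain_triangle_maximals[OF down \<open>A \<subset> B\<close> K_B(2)])
    show "A \<noteq> {}" "height A < height K"
      using \<open>level j - {y} \<noteq> {}\<close> heights assms(4) by (auto simp: A_def j_def)
    show "is_singleton (B - A)"
      using \<open>B - A = {y}\<close> by simp
    show "is_singleton (K - B)" if "height B = height K"
      using that heights assms(4) by (simp add: j_def)
  qed
  moreover have "(B - A) \<union> below (height B) = J"
    using \<open>B - A = {y}\<close> heights J_eq by auto
  ultimately show ?thesis
    using down K(1) \<open>A \<subset> B\<close> K_B(2) not_connected heights
    by (simp add: represented_by_def maximal_layers_def order_triangle_of_def order_triangle_def A_def B_def j_def)
qed

lemma order_triangle_represented:
  assumes "order_triangle I J K"
  obtains c where "represented_by (I, J, K) c"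
proof (cases "I = {}")
  case False
  then show ?thesis
    using represented_nonempty_bottom[OF assms] that by blast
next
  case True
  then have ot: "order_triangle {} J K"
    using assms by simp
  then have "height J \<le> height K"
    by (auto simp: order_triangle_def intro!: height_mono)
  consider "height J = height K \<or> \<not> is_singleton (maximals J)"
    | y where "maximals J = {y}" "height J < height K"
    using \<open>height J \<le> height K\<close> unfolding is_singleton_def by (metis le_neq_implies_less)
  then show ?thesis
  proof cases
    case 1
    then show ?thesis
      using represented_below_height[OF ot] that True by blast
  next
    case (2 y)
    consider "is_singleton (maximals K)" | p where "\<not> is_singleton (maximals K)" "height J < r p" "r p < height K"
      | "\<not> is_singleton (maximals K)" "\<not> (\<exists>p. height J < r p \<and> r p < height K)"
      by blast
    then show ?thesis
    proof cases
      case 1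
      then show ?thesis
        using represented_empty_singletons[OF ot] 2 that True by (simp add: is_singleton_def)
    next
      case (2 p)
      then show ?thesis
        using represented_below_top[OF ot] that True by blast
    next
      case 3
      then show ?thesis
        using represented_split_level[OF ot] \<open>maximals J = {y}\<close> \<open>height J < height K\<close> that True by blast
    qed
  qed
qed

lemma card_triangular_2faces_order_polytope_le:
  "card (triangular_2faces (order_polytope (rank_order r))) \<le> card {(I, J, K). order_triangle I J K}"
proof -
  let ?T = "{(I, J, K). order_triangle I J K}"
  let ?f = "\<lambda>(I, J, K). convex hull (char_vec ` {I, J, K}) :: (real^'n) set"
  have "triangular_2faces (order_polytope (rank_order r)) \<subseteq> ?f ` ?T"
  proof
    fix F assume "F \<in> triangular_2faces (order_polytope (rank_order r))"
    then obtain I J K where "order_triangle I J K" "F = convex hull (char_vec ` {I, J, K})"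
      by (rule triangular_2face_order_polytope)
    then show "F \<in> ?f ` ?T"
      by force
  qed
  then have "card (triangular_2faces (order_polytope (rank_order r))) \<le> card (?f ` ?T)"
    by (rule card_mono[rotated]) simp
  also have "\<dots> \<le> card ?T"
    by (rule card_image_le) simp
  finally show ?thesis .
qed

lemma card_order_triangles_le:
  "card {(I, J, K). order_triangle I J K} \<le> card (triangular_2faces (chain_polytope (rank_order r)))"
proof -
  define T where "T = {(I, J, K). order_triangle I J K}"
  have "\<forall>t\<in>T. \<exists>c. represented_by t c"
    using order_triangle_represented unfolding T_def by blast
  then obtain lift where lift: "\<And>t. t \<in> T \<Longrightarrow> represented_by t (lift t)"
    by metis
  define g where "g t = (convex hull (char_vec ` maximal_layers (lift t)) :: (real^'n) set)" for t
  have "inj_on g T"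
  proof (rule inj_onI)
    fix t t' assume "t \<in> T" "t' \<in> T" "g t = g t'"
    then have "maximal_layers (lift t) = maximal_layers (lift t')"
      using inj_convex_hull_char_vec unfolding g_def by (auto dest: injD)
    then show "t = t'"
      using decode_represented lift \<open>t \<in> T\<close> \<open>t' \<in> T\<close> by metis
  qed
  moreover have "g ` T \<subseteq> triangular_2faces (chain_polytope (rank_order r))"
    unfolding g_def using chain_triangle_face[OF represented_chain_triangle[OF lift]] by blast
  ultimately show ?thesis
    unfolding T_def using finite_triangular_2faces_chain_polytope by (rule card_inj_on_le)
qed

theorem card_triangular_2faces_rank_order_le:
  "card (triangular_2faces (order_polytope (rank_order r)))
     \<le> card (triangular_2faces (chain_polytope (rank_order r)))"
  using card_triangular_2faces_order_polytope_le card_order_triangles_le by (rule order.trans)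

end

section \<open>Maximal ranked posets\<close>

lemma rank_less:
  fixes le :: "'n::finite \<Rightarrow> 'n \<Rightarrow> bool"
  assumes po: "poset le" and "le p q" "p \<noteq> q"
  shows "rank le p < rank le q"
proof -
  define S where "S x = {card C - 1 | C. is_chain le C \<and> x \<in> C \<and> (\<forall>c\<in>C. le c x)}" for x
  have rank_S: "rank le x = Max (S x)" for x
    by (simp add: rank_def S_def)
  have fin: "finite (S x)" for x
  proof (rule finite_subset)
    show "S x \<subseteq> (\<lambda>C :: 'n set. card C - 1) ` UNIV"
      unfolding S_def by blast
  qed simp
  have refl: "le a a" and antisym: "le a b \<Longrightarrow> le b a \<Longrightarrow> a = b"
    and trans: "le a b \<Longrightarrow> le b c \<Longrightarrow> le a c" for a b c
    using po unfolding poset_def by blast+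
  have "card {p} - 1 \<in> S p"
    unfolding S_def using refl by (fastforce simp: is_chain_def)
  then have "rank le p \<in> S p"
    unfolding rank_S by (intro Max_in[OF fin]) blast
  then obtain C where C: "rank le p = card C - 1" "is_chain le C" "p \<in> C" "\<forall>c\<in>C. le c p"
    unfolding S_def by blast
  have "q \<notin> C"
    using C(4) assms(2,3) antisym by blast
  have "is_chain le (insert q C)" "\<forall>c\<in>insert q C. le c q"
    using C(2,4) assms(2) refl trans unfolding is_chain_def by blast+
  then have "card (insert q C) - 1 \<in> S q"
    unfolding S_def by blast
  then have "card (insert q C) - 1 \<le> rank le q"
    unfolding rank_S by (rule Max_ge[OF fin])
  moreover have "card (insert q C) = Suc (card C)" "card C \<noteq> 0"
    using \<open>q \<notin> C\<close> C(3) by (auto simp: card_insert_if)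
  ultimately show ?thesis
    using C(1) by linarith
qed

lemma maximal_ranked_eq_rank_order:
  fixes le :: "'n::finite \<Rightarrow> 'n \<Rightarrow> bool"
  assumes po: "poset le" and "maximal_ranked le"
  shows "le = rank_order (rank le)"
proof (intro ext iffI)
  fix p q
  assume "le p q"
  then show "rank_order (rank le) p q"
    using rank_less[OF po] by (auto simp: rank_order_def)
next
  fix p q
  assume "rank_order (rank le) p q"
  then consider "p = q" | "rank le p < rank le q"
    by (auto simp: rank_order_def)
  then show "le p q"
  proof cases
    case 1
    then show ?thesis
      using po unfolding poset_def by blast
  next
    case 2
    then have "le p q \<or> le q p"
      using assms(2) unfolding maximal_ranked_def by simp
    moreover have "\<not> le q p"
      using rank_less[OF po, of q p] 2 by auto
    ultimately show ?thesis
      by blast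
  qed
qed

theorem corollary3p5:
  fixes le :: "'n::finite \<Rightarrow> 'n \<Rightarrow> bool"
  assumes "poset le"
    and "maximal_ranked le"
  shows "card (triangular_2faces (order_polytope le))
           \<le> card (triangular_2faces (chain_polytope le))"
  using card_triangular_2faces_rank_order_le[of "rank le"]
  by (simp flip: maximal_ranked_eq_rank_order[OF assms])

end
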